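(* For any smooth complex-valued potential $V(t,x)$, $\dim\mathfrak g^{\mathrm{ess}}_V\le7$.
   Context: $\mathfrak g_V$ denotes the maximal Lie invariance algebra of the equation $i\psi_t+\psi_{xx}+V(t,x)\psi=0$ ($\psi$ complex-valued of real $t,x$; vector fields act on $(t,x,\psi,\psi^* )$ with $\psi^*$ an additional dependent variable), considered locally. With $M=i\psi\partial_\psi-i\psi^*\partial_{\psi^*}$, $I=\psi\partial_\psi+\psi^*\partial_{\psi^*}$, $D(\tau)=\tau\partial_t+\frac12\tau_tx\partial_x+\frac18\tau_{tt}x^2M$, $G(\chi)=\chi\partial_x+\frac12\chi_txM$, the essential Lie invariance algebra is $\mathfrak g^{\mathrm{ess}}_V:=\mathfrak g_V\cap\langle D(\tau),G(\chi),\sigma(t)M,\rho(t)I\rangle$, the span being over all smooth real functions $\tau,\chi,\sigma,\rho$ of $t$. *)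

theory Defs
  imports "HOL-Analysis.Analysis"
begin

definition pt :: "(real \<Rightarrow> real \<Rightarrow> 'a::real_normed_vector) \<Rightarrow> real \<Rightarrow> real \<Rightarrow> 'a" where
  "pt f t x = vector_derivative (\<lambda>s. f s x) (at t)"

definition px :: "(real \<Rightarrow> real \<Rightarrow> 'a::real_normed_vector) \<Rightarrow> real \<Rightarrow> real \<Rightarrow> 'a" where
  "px f t x = vector_derivative (\<lambda>y. f t y) (at x)"

datatype pdir = Dt | Dx

fun iter_partial :: "pdir list \<Rightarrow> (real \<Rightarrow> real \<Rightarrow> 'a::real_normed_vector) \<Rightarrow> real \<Rightarrow> real \<Rightarrow> 'a" where
  "iter_partial [] f = f"
| "iter_partial (Dt # ds) f = pt (iter_partial ds f)"
| "iter_partial (Dx # ds) f = px (iter_partial ds f)"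

definition smooth2_on :: "(real \<times> real) set \<Rightarrow> (real \<Rightarrow> real \<Rightarrow> 'a::real_normed_vector) \<Rightarrow> bool" where
  "smooth2_on S f \<longleftrightarrow> (\<forall>ds. continuous_on S (\<lambda>(t,x). iter_partial ds f t x) \<and>
      (\<forall>(t,x)\<in>S. (\<lambda>s. iter_partial ds f s x) differentiable (at t) \<and>
                  (\<lambda>y. iter_partial ds f t y) differentiable (at x)))"

definition smooth1_on :: "real set \<Rightarrow> (real \<Rightarrow> real) \<Rightarrow> bool" where
  "smooth1_on I f \<longleftrightarrow> (\<forall>n. \<forall>t\<in>I. ((deriv ^^ n) f) differentiable (at t))"

text \<open>Infinitesimal invariance criterion (second prolongation) of the system
  i psi_t + psi_xx + V psi = 0, -i psi*_t + psi*_xx + V* psi* = 0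
  for the point vector field
  Q = T(t,x) dt + Xi(t,x) dx + Phi(t,x) psi dpsi + conj(Phi(t,x)) psi* dpsi*,
  on the jet space over the domain I x J. The jet variables
  (u, ut, ux, utx, uxx) are the values of (psi, psi_t, psi_x, psi_tx, psi_xx),
  similarly (w, ...) for psi*.\<close>
definition pr_psi_t :: "(real\<Rightarrow>real\<Rightarrow>real) \<Rightarrow> (real\<Rightarrow>real\<Rightarrow>real) \<Rightarrow> (real\<Rightarrow>real\<Rightarrow>complex)
    \<Rightarrow> real \<Rightarrow> real \<Rightarrow> complex \<Rightarrow> complex \<Rightarrow> complex \<Rightarrow> complex" where
  "pr_psi_t T Xi Phi t x u ut ux =
     pt Phi t x * u + Phi t x * ut - of_real (pt T t x) * ut - of_real (pt Xi t x) * ux"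

definition pr_psi_xx :: "(real\<Rightarrow>real\<Rightarrow>real) \<Rightarrow> (real\<Rightarrow>real\<Rightarrow>real) \<Rightarrow> (real\<Rightarrow>real\<Rightarrow>complex)
    \<Rightarrow> real \<Rightarrow> real \<Rightarrow> complex \<Rightarrow> complex \<Rightarrow> complex \<Rightarrow> complex \<Rightarrow> complex \<Rightarrow> complex" where
  "pr_psi_xx T Xi Phi t x u ut ux utx uxx =
     px (px Phi) t x * u + 2 * px Phi t x * ux + Phi t x * uxx
     - of_real (px (px T) t x) * ut - 2 * of_real (px T t x) * utx
     - of_real (px (px Xi) t x) * ux - 2 * of_real (px Xi t x) * uxx"

definition lie_sym :: "real set \<Rightarrow> real set \<Rightarrow> (real\<Rightarrow>real\<Rightarrow>complex)
    \<Rightarrow> (real\<Rightarrow>real\<Rightarrow>real) \<Rightarrow> (real\<Rightarrow>real\<Rightarrow>real) \<Rightarrow> (real\<Rightarrow>real\<Rightarrow>complex) \<Rightarrow> bool" where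
  "lie_sym I J V T Xi Phi \<longleftrightarrow>
    (\<forall>t\<in>I. \<forall>x\<in>J. \<forall>u ut ux utx uxx.
       \<i> * ut + uxx + V t x * u = 0 \<longrightarrow>
       \<i> * pr_psi_t T Xi Phi t x u ut ux + pr_psi_xx T Xi Phi t x u ut ux utx uxx
       + (of_real (T t x) * pt V t x + of_real (Xi t x) * px V t x) * u
       + V t x * (Phi t x * u) = 0) \<and>
    (\<forall>t\<in>I. \<forall>x\<in>J. \<forall>w wt wx wtx wxx.
       - \<i> * wt + wxx + cnj (V t x) * w = 0 \<longrightarrow>
       - \<i> * pr_psi_t T Xi (\<lambda>t x. cnj (Phi t x)) t x w wt wx
       + pr_psi_xx T Xi (\<lambda>t x. cnj (Phi t x)) t x w wt wx wtx wxx
       + (of_real (T t x) * pt (\<lambda>t x. cnj (V t x)) t x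
          + of_real (Xi t x) * px (\<lambda>t x. cnj (V t x)) t x) * w
       + cnj (V t x) * (cnj (Phi t x) * w) = 0)"

text \<open>Coefficients of Q = D(ta) + G(ch) + sg M + rh I.\<close>
definition coefT :: "(real\<Rightarrow>real) \<times> (real\<Rightarrow>real) \<times> (real\<Rightarrow>real) \<times> (real\<Rightarrow>real) \<Rightarrow> real \<Rightarrow> real \<Rightarrow> real" where
  "coefT q t x = (case q of (ta, ch, sg, rh) \<Rightarrow> ta t)"

definition coefX :: "(real\<Rightarrow>real) \<times> (real\<Rightarrow>real) \<times> (real\<Rightarrow>real) \<times> (real\<Rightarrow>real) \<Rightarrow> real \<Rightarrow> real \<Rightarrow> real" where
  "coefX q t x = (case q of (ta, ch, sg, rh) \<Rightarrow> deriv ta t * x / 2 + ch t)"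

definition coefPhi :: "(real\<Rightarrow>real) \<times> (real\<Rightarrow>real) \<times> (real\<Rightarrow>real) \<times> (real\<Rightarrow>real) \<Rightarrow> real \<Rightarrow> real \<Rightarrow> complex" where
  "coefPhi q t x = (case q of (ta, ch, sg, rh) \<Rightarrow>
      \<i> * of_real ((deriv ^^ 2) ta t * x\<^sup>2 / 8 + deriv ch t * x / 2 + sg t) + of_real (rh t))"

definition vf :: "(real\<Rightarrow>real) \<times> (real\<Rightarrow>real) \<times> (real\<Rightarrow>real) \<times> (real\<Rightarrow>real)
    \<Rightarrow> real \<Rightarrow> real \<Rightarrow> complex \<Rightarrow> complex \<Rightarrow> real \<times> real \<times> complex \<times> complex" where
  "vf q t x u w = (coefT q t x, coefX q t x, coefPhi q t x * u, cnj (coefPhi q t x) * w)"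

definition ess_alg :: "real set \<Rightarrow> real set \<Rightarrow> (real\<Rightarrow>real\<Rightarrow>complex)
    \<Rightarrow> ((real\<Rightarrow>real) \<times> (real\<Rightarrow>real) \<times> (real\<Rightarrow>real) \<times> (real\<Rightarrow>real)) set" where
  "ess_alg I J V = {q. case q of (ta, ch, sg, rh) \<Rightarrow>
      smooth1_on I ta \<and> smooth1_on I ch \<and> smooth1_on I sg \<and> smooth1_on I rh \<and>
      lie_sym I J V (coefT q) (coefX q) (coefPhi q)}"

definition vf_lin_indep :: "real set \<Rightarrow> real set \<Rightarrow> nat
    \<Rightarrow> (nat \<Rightarrow> (real\<Rightarrow>real) \<times> (real\<Rightarrow>real) \<times> (real\<Rightarrow>real) \<times> (real\<Rightarrow>real)) \<Rightarrow> bool" where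
  "vf_lin_indep I J k q \<longleftrightarrow>
     (\<forall>c :: nat \<Rightarrow> real.
        (\<forall>t\<in>I. \<forall>x\<in>J. \<forall>u w. (\<Sum>i<k. c i *\<^sub>R vf (q i) t x u w) = 0) \<longrightarrow> (\<forall>i<k. c i = 0))"

end

theory Submission
  imports Defs
begin

text \<open>An element of the essential algebra is determined by the jet \<open>(\<tau>, \<tau>', \<tau>'', \<chi>, \<chi>', \<sigma>, \<rho>)\<close>
  of its parameters at a single time \<open>t\<^sub>0\<close>. The invariance condition at the jet \<open>\<psi> = 1\<close>,
  \<open>\<psi>\<^sub>x\<^sub>x = - V\<close> yields, for every \<open>x\<close>, a real equation whose left-hand side is the quadratic
  \<open>\<tau>''' x\<^sup>2/8 + \<chi>'' x/2 + \<sigma>'\<close> and an imaginary one expressing \<open>\<rho>'\<close>, both with right-hand sides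
  linear in the jet. Sampling three values of \<open>x\<close> therefore bounds the derivative of the jet by
  the jet itself on compact time intervals, and Gronwall's inequality shows that a linear
  combination whose jet vanishes at \<open>t\<^sub>0\<close> vanishes identically.\<close>

lemma sum_abs_squared_le:
  fixes f :: "'a \<Rightarrow> real"
  shows "(\<Sum>i\<in>A. \<bar>f i\<bar>)\<^sup>2 \<le> real (card A) * (\<Sum>i\<in>A. (f i)\<^sup>2)"
proof -
  have "(\<Sum>i\<in>A. \<bar>f i\<bar>) \<le> L2_set f A * sqrt (real (card A))"
    using L2_set_mult_ineq[of f "\<lambda>_. 1" A] by (simp add: L2_set_constant)
  then have "(\<Sum>i\<in>A. \<bar>f i\<bar>)\<^sup>2 \<le> (L2_set f A * sqrt (real (card A)))\<^sup>2"
    by (simp add: power_mono sum_nonneg)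
  then show ?thesis
    by (simp add: power_mult_distrib L2_set_def sum_nonneg mult.commute)
qed

lemma deriv_le_linear_imp_zero:
  fixes E E' :: "real \<Rightarrow> real"
  assumes "t0 \<le> t"
    and der: "\<And>s. t0 \<le> s \<Longrightarrow> s \<le> t \<Longrightarrow> (E has_real_derivative E' s) (at s)"
    and growth: "\<And>s. t0 \<le> s \<Longrightarrow> s \<le> t \<Longrightarrow> E' s \<le> L * E s"
    and "E t0 = 0" "0 \<le> E t"
  shows "E t = 0"
proof -
  \<comment> \<open>the integrating factor \<open>exp (- L s)\<close> turns the growth bound into monotonicity\<close>
  have "E t * exp (- L * t) \<le> E t0 * exp (- L * t0)"
  proof (rule DERIV_nonpos_imp_nonincreasing[OF \<open>t0 \<le> t\<close>])
    fix s assume s: "t0 \<le> s" "s \<le> t"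
    have "((\<lambda>s. E s * exp (- L * s)) has_real_derivative (E' s - L * E s) * exp (- L * s)) (at s)"
      by (auto intro!: derivative_eq_intros der s simp: algebra_simps)
    moreover have "(E' s - L * E s) * exp (- L * s) \<le> 0"
      using growth[OF s] by (simp add: mult_nonpos_nonneg)
    ultimately show "\<exists>y. ((\<lambda>s. E s * exp (- L * s)) has_real_derivative y) (at s) \<and> y \<le> 0"
      by blast
  qed
  then show ?thesis using assms(4,5) by (simp add: mult_le_0_iff)
qed

lemma gronwall_zero:
  fixes E E' :: "real \<Rightarrow> real"
  assumes der: "\<And>s. a \<le> s \<Longrightarrow> s \<le> b \<Longrightarrow> (E has_real_derivative E' s) (at s)"
    and growth: "\<And>s. a \<le> s \<Longrightarrow> s \<le> b \<Longrightarrow> \<bar>E' s\<bar> \<le> L * E s"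
    and "\<And>s. 0 \<le> E s"
    and "a \<le> t0" "t0 \<le> b" "E t0 = 0" and "a \<le> t" "t \<le> b"
  shows "E t = 0"
proof (cases "t0 \<le> t")
  case True
  show ?thesis
  proof (rule deriv_le_linear_imp_zero[OF True, of E E' L])
    fix s assume "t0 \<le> s" "s \<le> t"
    with assms have "a \<le> s" "s \<le> b" by auto
    then show "(E has_real_derivative E' s) (at s)" "E' s \<le> L * E s"
      using der growth[of s] by auto
  qed (use assms in auto)
next
  case False
  \<comment> \<open>backwards in time: apply the forward case to \<open>s \<mapsto> E (- s)\<close>\<close>
  have "E (- (- t)) = 0"
  proof (rule deriv_le_linear_imp_zero[of "- t0" "- t" "\<lambda>s. E (- s)" "\<lambda>s. - E' (- s)" L])
    fix s assume "- t0 \<le> s" "s \<le> - t"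
    with assms have "a \<le> - s" "- s \<le> b" by auto
    then show "((\<lambda>s. E (- s)) has_real_derivative - E' (- s)) (at s)" "- E' (- s) \<le> L * E (- s)"
      using der growth[of "- s"] by (auto simp: DERIV_mirror[symmetric])
  qed (use False assms in auto)
  then show ?thesis by simp
qed

lemma linear_ode_zero:
  fixes z z' :: "nat \<Rightarrow> real \<Rightarrow> real"
  assumes der: "\<And>j s. j < n \<Longrightarrow> a \<le> s \<Longrightarrow> s \<le> b \<Longrightarrow> (z j has_real_derivative z' j s) (at s)"
    and bound: "\<And>j s. j < n \<Longrightarrow> a \<le> s \<Longrightarrow> s \<le> b \<Longrightarrow> \<bar>z' j s\<bar> \<le> K * (\<Sum>k<n. \<bar>z k s\<bar>)"
    and "a \<le> t0" "t0 \<le> b" "\<And>j. j < n \<Longrightarrow> z j t0 = 0"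
    and "a \<le> t" "t \<le> b"
  shows "\<forall>j<n. z j t = 0"
proof -
  define E where "E s = (\<Sum>j<n. (z j s)\<^sup>2)" for s
  define E' where "E' s = (\<Sum>j<n. 2 * z j s * z' j s)" for s
  have "E t = 0"
  proof (rule gronwall_zero[of a b E E' "2 * \<bar>K\<bar> * n" t0])
    fix s assume s: "a \<le> s" "s \<le> b"
    show "(E has_real_derivative E' s) (at s)"
      unfolding E_def E'_def by (rule DERIV_sum) (auto intro!: derivative_eq_intros der s)
    define S where "S = (\<Sum>k<n. \<bar>z k s\<bar>)"
    have "\<bar>E' s\<bar> \<le> (\<Sum>j<n. 2 * \<bar>z j s\<bar> * \<bar>z' j s\<bar>)"
      unfolding E'_def by (rule order_trans[OF sum_abs]) (simp add: abs_mult)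
    also have "\<dots> \<le> (\<Sum>j<n. 2 * \<bar>z j s\<bar> * (\<bar>K\<bar> * S))"
      using s by (intro sum_mono mult_left_mono)
        (auto simp: S_def intro!: order_trans[OF bound] mult_right_mono sum_nonneg)
    also have "\<dots> = 2 * \<bar>K\<bar> * S\<^sup>2"
      by (simp add: S_def power2_eq_square sum_distrib_left sum_distrib_right mult_ac)
    also have "\<dots> \<le> 2 * \<bar>K\<bar> * n * E s"
      using sum_abs_squared_le[of "\<lambda>k. z k s" "{..<n}"] by (simp add: S_def E_def mult_left_mono)
    finally show "\<bar>E' s\<bar> \<le> 2 * \<bar>K\<bar> * n * E s" .
  qed (use assms in \<open>auto simp: E_def sum_nonneg\<close>)
  then show ?thesis by (simp add: E_def sum_nonneg_eq_0_iff)
qed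

lemma quadratic_coeffs_bounded_by_values:
  fixes x1 h :: real
  assumes "h > 0"
  obtains D where "0 \<le> D"
    and "\<And>a b c Q. \<bar>a * x1\<^sup>2 + b * x1 + c\<bar> \<le> Q \<Longrightarrow> \<bar>a * (x1 + h)\<^sup>2 + b * (x1 + h) + c\<bar> \<le> Q
           \<Longrightarrow> \<bar>a * (x1 + 2 * h)\<^sup>2 + b * (x1 + 2 * h) + c\<bar> \<le> Q
           \<Longrightarrow> \<bar>a\<bar> \<le> D * Q \<and> \<bar>b\<bar> \<le> D * Q \<and> \<bar>c\<bar> \<le> D * Q"
proof
  define Da where "Da = 2 / h\<^sup>2"
  define Db where "Db = 2 / h + Da * (2 * \<bar>x1\<bar> + h)"
  define Dc where "Dc = 1 + Da * x1\<^sup>2 + Db * \<bar>x1\<bar>"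
  have D_nonneg: "0 \<le> Da" "0 \<le> Db" "0 \<le> Dc"
    using assms by (simp_all add: Da_def Db_def Dc_def)
  then show "0 \<le> Da + Db + Dc" by simp
  fix a b c Q
  define p0 p1 p2 where "p0 = a * x1\<^sup>2 + b * x1 + c"
    and "p1 = a * (x1 + h)\<^sup>2 + b * (x1 + h) + c" and "p2 = a * (x1 + 2 * h)\<^sup>2 + b * (x1 + 2 * h) + c"
  assume "\<bar>a * x1\<^sup>2 + b * x1 + c\<bar> \<le> Q" "\<bar>a * (x1 + h)\<^sup>2 + b * (x1 + h) + c\<bar> \<le> Q"
    "\<bar>a * (x1 + 2 * h)\<^sup>2 + b * (x1 + 2 * h) + c\<bar> \<le> Q"
  then have p: "\<bar>p0\<bar> \<le> Q" "\<bar>p1\<bar> \<le> Q" "\<bar>p2\<bar> \<le> Q" by (simp_all add: p0_def p1_def p2_def)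
  \<comment> \<open>Newton's divided differences recover the coefficients from the three values\<close>
  have a_eq: "a = (p0 - 2 * p1 + p2) / (2 * h\<^sup>2)"
    using assms by (simp add: p0_def p1_def p2_def field_simps power2_eq_square)
  have b_eq: "b = (p1 - p0) / h - a * (2 * x1 + h)"
    using assms by (simp add: p0_def p1_def field_simps power2_eq_square)
  have c_eq: "c = p0 - a * x1\<^sup>2 - b * x1"
    by (simp add: p0_def)
  have "\<bar>a\<bar> = \<bar>p0 - 2 * p1 + p2\<bar> / (2 * h\<^sup>2)"
    unfolding a_eq by (simp add: abs_divide)
  also have "\<dots> \<le> 4 * Q / (2 * h\<^sup>2)"
    using p by (intro divide_right_mono) auto
  finally have a_le: "\<bar>a\<bar> \<le> Da * Q" by (simp add: Da_def)
  have "\<bar>b\<bar> \<le> 2 * Q / h + \<bar>a\<bar> * (2 * \<bar>x1\<bar> + h)"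
  proof -
    have "\<bar>(p1 - p0) / h\<bar> \<le> 2 * Q / h"
      using assms p by (simp add: abs_divide divide_right_mono)
    moreover have "\<bar>a * (2 * x1 + h)\<bar> \<le> \<bar>a\<bar> * (2 * \<bar>x1\<bar> + h)"
      using assms by (simp add: abs_mult mult_left_mono)
    ultimately show ?thesis unfolding b_eq by linarith
  qed
  also have "\<dots> \<le> 2 * Q / h + Da * Q * (2 * \<bar>x1\<bar> + h)"
    using a_le assms by (simp add: mult_right_mono)
  finally have b_le: "\<bar>b\<bar> \<le> Db * Q" by (simp add: Db_def algebra_simps)
  have "\<bar>c\<bar> \<le> Q + \<bar>a\<bar> * x1\<^sup>2 + \<bar>b\<bar> * \<bar>x1\<bar>"
    unfolding c_eq using p abs_triangle_ineq4[of p0 "a * x1\<^sup>2"]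
      abs_triangle_ineq4[of "p0 - a * x1\<^sup>2" "b * x1"]
    by (simp add: abs_mult)
  also have "\<dots> \<le> Q + Da * Q * x1\<^sup>2 + Db * Q * \<bar>x1\<bar>"
    using a_le b_le by (intro add_mono mult_right_mono) auto
  finally have c_le: "\<bar>c\<bar> \<le> Dc * Q" by (simp add: Dc_def algebra_simps)
  have "0 \<le> Q" using p by linarith
  with a_le b_le c_le D_nonneg
  show "\<bar>a\<bar> \<le> (Da + Db + Dc) * Q \<and> \<bar>b\<bar> \<le> (Da + Db + Dc) * Q \<and> \<bar>c\<bar> \<le> (Da + Db + Dc) * Q"
    by (simp add: distrib_right add_increasing add_increasing2)
qed

lemma exists_nontrivial_lincomb_eq_0:
  fixes v :: "nat \<Rightarrow> 'a::euclidean_space"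
  assumes "DIM('a) < k"
  obtains c where "\<exists>i<k. c i \<noteq> 0" "(\<Sum>i<k. c i *\<^sub>R v i) = 0"
proof (cases "inj_on v {..<k}")
  case False
  then obtain i j where ij: "i < k" "j < k" "i \<noteq> j" "v i = v j"
    unfolding inj_on_def by auto
  define c where "c l = (if l = i then 1 else if l = j then -1 else 0 :: real)" for l
  have "(\<Sum>l<k. c l *\<^sub>R v l) = (\<Sum>l<k. (if l = i then v i else 0) - (if l = j then v j else 0))"
    using ij by (intro sum.cong) (auto simp: c_def)
  also have "\<dots> = 0"
    using ij by (simp add: sum_subtractf)
  finally show ?thesis
    using ij by (intro that[of c]) (auto simp: c_def)
next
  case True
  have "card (v ` {..<k}) = k"
    using True by (simp add: card_image)
  then have "\<not> independent (v ` {..<k})"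
    using independent_bound assms by fastforce
  then obtain u where u: "(\<Sum>w\<in>v ` {..<k}. u w *\<^sub>R w) = 0" "\<exists>w\<in>v ` {..<k}. u w \<noteq> 0"
    using finite_imageI[OF finite_lessThan, of v] unfolding independent_explicit by blast
  have "(\<Sum>i<k. u (v i) *\<^sub>R v i) = 0"
    using u(1) sum.reindex[OF True, of "\<lambda>w. u w *\<^sub>R w"] by simp
  with u(2) show ?thesis
    by (intro that[of "\<lambda>i. u (v i)"]) auto
qed

lemma smooth2_on_iter_partial_bounded:
  assumes "smooth2_on S f" "compact K" "K \<subseteq> S"
  obtains M where "0 \<le> M" "\<And>t x. (t, x) \<in> K \<Longrightarrow> norm (iter_partial ds f t x) \<le> M"
proof -
  have "continuous_on K (\<lambda>(t, x). iter_partial ds f t x)"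
    using assms(1,3) unfolding smooth2_on_def by (blast intro: continuous_on_subset)
  then obtain M where "0 \<le> M" "\<And>y. y \<in> K \<Longrightarrow> norm ((\<lambda>(t, x). iter_partial ds f t x) y) \<le> M"
    using continuous_on_compact_bound[OF assms(2)] by blast
  then show ?thesis by (intro that[of M]) auto
qed

lemma smooth2_on_first_partials_bounded:
  assumes "smooth2_on S V" "compact K" "K \<subseteq> S"
  obtains M where "0 \<le> M"
    "\<And>t x. (t, x) \<in> K \<Longrightarrow> norm (V t x) \<le> M \<and> norm (pt V t x) \<le> M \<and> norm (px V t x) \<le> M"
proof -
  obtain M0 M1 M2 where "0 \<le> M0" "0 \<le> M1" "0 \<le> M2"
    and "\<And>t x. (t, x) \<in> K \<Longrightarrow> norm (iter_partial [] V t x) \<le> M0"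
    and "\<And>t x. (t, x) \<in> K \<Longrightarrow> norm (iter_partial [Dt] V t x) \<le> M1"
    and "\<And>t x. (t, x) \<in> K \<Longrightarrow> norm (iter_partial [Dx] V t x) \<le> M2"
    using smooth2_on_iter_partial_bounded[OF assms] by metis
  then show ?thesis
    by (intro that[of "M0 + M1 + M2"]) force+
qed

lemma lie_sym_potential_eq:
  assumes "lie_sym I J V T Xi Phi" "t \<in> I" "x \<in> J"
  shows "\<i> * pt Phi t x + px (px Phi) t x + 2 * of_real (px Xi t x) * V t x
           + of_real (T t x) * pt V t x + of_real (Xi t x) * px V t x = 0"
proof -
  \<comment> \<open>the invariance condition at the jet \<open>\<psi> = 1\<close>, \<open>\<psi>\<^sub>x\<^sub>x = - V\<close>, all other derivatives zero\<close>
  have "\<i> * pr_psi_t T Xi Phi t x 1 0 0 + pr_psi_xx T Xi Phi t x 1 0 0 0 (- V t x)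
        + (of_real (T t x) * pt V t x + of_real (Xi t x) * px V t x) * 1 + V t x * (Phi t x * 1) = 0"
    using assms unfolding lie_sym_def by (simp del: mult_1_right)
  then show ?thesis
    by (simp add: pr_psi_t_def pr_psi_xx_def algebra_simps)
qed

lemma smooth1_on_has_derivative:
  assumes "smooth1_on I f" "t \<in> I"
  shows "((deriv ^^ n) f has_real_derivative (deriv ^^ Suc n) f t) (at t)"
  using assms DERIV_deriv_iff_real_differentiable by (simp add: smooth1_on_def)

lemma pt_coefPhi:
  assumes "smooth1_on I ta" "smooth1_on I ch" "smooth1_on I sg" "smooth1_on I rh" "t \<in> I"
  shows "pt (coefPhi (ta, ch, sg, rh)) t x
           = \<i> * of_real ((deriv ^^ 3) ta t * x\<^sup>2 / 8 + deriv (deriv ch) t * x / 2 + deriv sg t)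
             + of_real (deriv rh t)"
proof -
  note d = smooth1_on_has_derivative[OF _ \<open>t \<in> I\<close>]
  have "((deriv ^^ 2) ta has_real_derivative (deriv ^^ 3) ta t) (at t)"
    using d[OF assms(1), of 2] by (simp add: numeral_3_eq_3)
  moreover have "(deriv ch has_real_derivative deriv (deriv ch) t) (at t)"
    using d[OF assms(2), of 1] by simp
  moreover have "(sg has_real_derivative deriv sg t) (at t)" "(rh has_real_derivative deriv rh t) (at t)"
    using d[OF assms(3), of 0] d[OF assms(4), of 0] by simp_all
  ultimately show ?thesis
    unfolding pt_def coefPhi_def prod.case
    by (intro vector_derivative_at)
       (auto intro!: derivative_eq_intros has_vector_derivative_mult_right)
qed

lemma px_coefPhi:
  "px (coefPhi (ta, ch, sg, rh)) t y = \<i> * of_real ((deriv ^^ 2) ta t * y / 4 + deriv ch t / 2)"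
proof -
  have "((\<lambda>y. (deriv ^^ 2) ta t * y\<^sup>2 / 8 + deriv ch t * y / 2 + sg t)
         has_real_derivative (deriv ^^ 2) ta t * y / 4 + deriv ch t / 2) (at y)"
    by (auto intro!: derivative_eq_intros simp: field_simps)
  then have "((\<lambda>y. \<i> * of_real ((deriv ^^ 2) ta t * y\<^sup>2 / 8 + deriv ch t * y / 2 + sg t) + of_real (rh t))
         has_vector_derivative \<i> * of_real ((deriv ^^ 2) ta t * y / 4 + deriv ch t / 2) + 0) (at y)"
    by (intro has_vector_derivative_add has_vector_derivative_mult_right
          has_vector_derivative_of_real has_vector_derivative_const)
  then show ?thesis
    unfolding px_def coefPhi_def prod.case by (subst vector_derivative_at) simp_all
qed

lemma px_px_coefPhi: "px (px (coefPhi (ta, ch, sg, rh))) t x = \<i> * of_real ((deriv ^^ 2) ta t / 4)"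
proof -
  have "((\<lambda>y. (deriv ^^ 2) ta t * y / 4 + deriv ch t / 2) has_real_derivative (deriv ^^ 2) ta t / 4) (at x)"
    by (auto intro!: derivative_eq_intros)
  then have "((\<lambda>y. \<i> * of_real ((deriv ^^ 2) ta t * y / 4 + deriv ch t / 2))
         has_vector_derivative \<i> * of_real ((deriv ^^ 2) ta t / 4)) (at x)"
    by (intro has_vector_derivative_mult_right has_vector_derivative_of_real)
  then show ?thesis
    unfolding px_def[of "px _"] px_coefPhi by (rule vector_derivative_at)
qed

lemma px_coefX: "px (coefX (ta, ch, sg, rh)) t x = deriv ta t / 2"
  unfolding px_def coefX_def prod.case
  by (rule vector_derivative_at)
     (auto intro!: derivative_eq_intros simp: has_real_derivative_iff_has_vector_derivative[symmetric])

type_synonym params = "(real \<Rightarrow> real) \<times> (real \<Rightarrow> real) \<times> (real \<Rightarrow> real) \<times> (real \<Rightarrow> real)"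

definition jet :: "params \<Rightarrow> nat \<Rightarrow> real \<Rightarrow> real" where
  "jet q j t = (case q of (ta, ch, sg, rh) \<Rightarrow>
     [ta t, deriv ta t, (deriv ^^ 2) ta t, ch t, deriv ch t, sg t, rh t] ! j)"

definition jet' :: "params \<Rightarrow> nat \<Rightarrow> real \<Rightarrow> real" where
  "jet' q j t = (case q of (ta, ch, sg, rh) \<Rightarrow>
     [deriv ta t, (deriv ^^ 2) ta t, (deriv ^^ 3) ta t,
      deriv ch t, deriv (deriv ch) t, deriv sg t, deriv rh t] ! j)"

text \<open>\<open>Z j\<close> and \<open>Z' j\<close> stand for \<open>jet q j\<close> and \<open>jet' q j\<close>; the system is linear in \<open>(Z, Z')\<close>.\<close>

definition determining_system ::
    "real set \<Rightarrow> real set \<Rightarrow> (real \<Rightarrow> real \<Rightarrow> complex)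
      \<Rightarrow> (nat \<Rightarrow> real \<Rightarrow> real) \<Rightarrow> (nat \<Rightarrow> real \<Rightarrow> real) \<Rightarrow> bool"
  where
  "determining_system I J V Z Z' \<longleftrightarrow> (\<forall>t\<in>I.
     (\<forall>j<7. (Z j has_real_derivative Z' j t) (at t)) \<and>
     Z' 0 t = Z 1 t \<and> Z' 1 t = Z 2 t \<and> Z' 3 t = Z 4 t \<and>
     (\<forall>x\<in>J. Z' 2 t * x\<^sup>2 / 8 + Z' 4 t * x / 2 + Z' 5 t
        = Z 1 t * Re (V t x) + Z 0 t * Re (pt V t x) + (Z 1 t * x / 2 + Z 3 t) * Re (px V t x)) \<and>
     (\<forall>x\<in>J. Z' 6 t + Z 2 t / 4
        + Z 1 t * Im (V t x) + Z 0 t * Im (pt V t x) + (Z 1 t * x / 2 + Z 3 t) * Im (px V t x) = 0))"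

lemma less_7_cases: "j < (7::nat) \<Longrightarrow> j = 0 \<or> j = 1 \<or> j = 2 \<or> j = 3 \<or> j = 4 \<or> j = 5 \<or> j = 6"
  by arith

lemma ess_alg_determining_system:
  assumes "q \<in> ess_alg I J V"
  shows "determining_system I J V (jet q) (jet' q)"
proof -
  obtain ta ch sg rh where q: "q = (ta, ch, sg, rh)" by (cases q)
  from assms have sm: "smooth1_on I ta" "smooth1_on I ch" "smooth1_on I sg" "smooth1_on I rh"
    and sym: "lie_sym I J V (coefT q) (coefX q) (coefPhi q)"
    by (auto simp: ess_alg_def q)
  show ?thesis unfolding determining_system_def
  proof (intro ballI conjI allI impI)
    fix t assume t: "t \<in> I"
    note d = smooth1_on_has_derivative[OF _ t]
    fix j :: nat assume "j < 7"
    then show "(jet q j has_real_derivative jet' q j t) (at t)"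
      using d[OF sm(1), of 0] d[OF sm(1), of 1] d[OF sm(1), of 2] d[OF sm(2), of 0] d[OF sm(2), of 1]
        d[OF sm(3), of 0] d[OF sm(4), of 0]
      by (auto dest!: less_7_cases simp: jet_def[abs_def] jet'_def q numeral_2_eq_2 numeral_3_eq_3)
  next
    fix t assume t: "t \<in> I"
    show "jet' q 0 t = jet q 1 t" "jet' q 1 t = jet q 2 t" "jet' q 3 t = jet q 4 t"
      by (simp_all add: jet_def jet'_def q)
    fix x assume x: "x \<in> J"
    have "\<i> * (\<i> * of_real ((deriv ^^ 3) ta t * x\<^sup>2 / 8 + deriv (deriv ch) t * x / 2 + deriv sg t)
             + of_real (deriv rh t))
          + \<i> * of_real ((deriv ^^ 2) ta t / 4) + 2 * of_real (deriv ta t / 2) * V t x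
          + of_real (ta t) * pt V t x + of_real (deriv ta t * x / 2 + ch t) * px V t x = 0"
      using lie_sym_potential_eq[OF sym t x]
      by (simp add: q pt_coefPhi[OF sm t] px_px_coefPhi px_coefX coefT_def coefX_def)
    from arg_cong[OF this, of Re] arg_cong[OF this, of Im]
    show "jet' q 2 t * x\<^sup>2 / 8 + jet' q 4 t * x / 2 + jet' q 5 t
            = jet q 1 t * Re (V t x) + jet q 0 t * Re (pt V t x) + (jet q 1 t * x / 2 + jet q 3 t) * Re (px V t x)"
      "jet' q 6 t + jet q 2 t / 4 + jet q 1 t * Im (V t x) + jet q 0 t * Im (pt V t x)
            + (jet q 1 t * x / 2 + jet q 3 t) * Im (px V t x) = 0"
      by (simp_all add: jet_def jet'_def q algebra_simps)
  qed
qed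

lemma determining_system_lincomb:
  assumes "\<And>i. i < k \<Longrightarrow> determining_system I J V (Z i) (Z' i)"
  shows "determining_system I J V (\<lambda>j t. \<Sum>i<k. c i * Z i j t) (\<lambda>j t. \<Sum>i<k. c i * Z' i j t)"
  unfolding determining_system_def
proof (intro ballI conjI allI impI)
  fix t assume t: "t \<in> I"
  note sys = assms[unfolded determining_system_def, rule_format, OF _ t]
  fix j :: nat assume "j < 7"
  then show "((\<lambda>t. \<Sum>i<k. c i * Z i j t) has_real_derivative (\<Sum>i<k. c i * Z' i j t)) (at t)"
    using sys by (intro DERIV_sum DERIV_cmult) auto
next
  fix t assume t: "t \<in> I"
  note sys = assms[unfolded determining_system_def, rule_format, OF _ t]
  show "(\<Sum>i<k. c i * Z' i 0 t) = (\<Sum>i<k. c i * Z i 1 t)"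
    "(\<Sum>i<k. c i * Z' i 1 t) = (\<Sum>i<k. c i * Z i 2 t)"
    "(\<Sum>i<k. c i * Z' i 3 t) = (\<Sum>i<k. c i * Z i 4 t)"
    using sys by (auto intro: sum.cong)
  fix x assume x: "x \<in> J"
  have re: "(\<Sum>i<k. c i * (Z' i 2 t * x\<^sup>2 / 8 + Z' i 4 t * x / 2 + Z' i 5 t
              - (Z i 1 t * Re (V t x) + Z i 0 t * Re (pt V t x) + (Z i 1 t * x / 2 + Z i 3 t) * Re (px V t x)))) = 0"
    using sys x by (auto intro!: sum.neutral)
  have im: "(\<Sum>i<k. c i * (Z' i 6 t + Z i 2 t / 4 + Z i 1 t * Im (V t x) + Z i 0 t * Im (pt V t x)
              + (Z i 1 t * x / 2 + Z i 3 t) * Im (px V t x))) = 0"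
    using sys x by (auto intro!: sum.neutral)
  from re show "(\<Sum>i<k. c i * Z' i 2 t) * x\<^sup>2 / 8 + (\<Sum>i<k. c i * Z' i 4 t) * x / 2 + (\<Sum>i<k. c i * Z' i 5 t)
      = (\<Sum>i<k. c i * Z i 1 t) * Re (V t x) + (\<Sum>i<k. c i * Z i 0 t) * Re (pt V t x)
        + ((\<Sum>i<k. c i * Z i 1 t) * x / 2 + (\<Sum>i<k. c i * Z i 3 t)) * Re (px V t x)"
    by (simp add: sum_distrib_left sum_distrib_right sum_subtractf sum.distrib algebra_simps sum_divide_distrib)
  from im show "(\<Sum>i<k. c i * Z' i 6 t) + (\<Sum>i<k. c i * Z i 2 t) / 4
      + (\<Sum>i<k. c i * Z i 1 t) * Im (V t x) + (\<Sum>i<k. c i * Z i 0 t) * Im (pt V t x)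
      + ((\<Sum>i<k. c i * Z i 1 t) * x / 2 + (\<Sum>i<k. c i * Z i 3 t)) * Im (px V t x) = 0"
    by (simp add: sum_distrib_left sum_distrib_right sum.distrib algebra_simps sum_divide_distrib)
qed

lemma abs_potential_term_le:
  fixes z0 z1 z3 a b d x S M :: real
  assumes "\<bar>z0\<bar> \<le> S" "\<bar>z1\<bar> \<le> S" "\<bar>z3\<bar> \<le> S" "\<bar>a\<bar> \<le> M" "\<bar>b\<bar> \<le> M" "\<bar>d\<bar> \<le> M"
  shows "\<bar>z1 * a + z0 * b + (z1 * x / 2 + z3) * d\<bar> \<le> (3 + \<bar>x\<bar>) * M * S"
proof -
  have "0 \<le> S" "0 \<le> M" using assms(1,4) by linarith+
  have "\<bar>z1 * x / 2 + z3\<bar> \<le> S * \<bar>x\<bar> / 2 + S"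
  proof -
    have "\<bar>z1\<bar> * \<bar>x\<bar> \<le> S * \<bar>x\<bar>" using assms(2) by (rule mult_right_mono) simp
    then show ?thesis
      using assms(3) abs_triangle_ineq[of "z1 * x / 2" z3] by (simp add: abs_mult)
  qed
  then have "\<bar>(z1 * x / 2 + z3) * d\<bar> \<le> (S * \<bar>x\<bar> / 2 + S) * M"
    unfolding abs_mult using assms \<open>0 \<le> S\<close> by (intro mult_mono) auto
  moreover have "\<bar>z1 * a\<bar> \<le> S * M" "\<bar>z0 * b\<bar> \<le> S * M"
    unfolding abs_mult using assms by (auto intro: mult_mono)
  ultimately have "\<bar>z1 * a + z0 * b + (z1 * x / 2 + z3) * d\<bar> \<le> S * M + S * M + (S * \<bar>x\<bar> / 2 + S) * M"
    by (smt (verit) abs_triangle_ineq)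
  also have "\<dots> \<le> (3 + \<bar>x\<bar>) * M * S"
    using \<open>0 \<le> S\<close> \<open>0 \<le> M\<close> by (simp add: algebra_simps)
  finally show ?thesis .
qed

lemma determining_system_deriv_bound:
  assumes sys: "determining_system I J V Z Z'" and V: "smooth2_on (I \<times> J) V"
    and "open J" "J \<noteq> {}" and ab: "{a..b} \<subseteq> I"
  obtains K where "\<And>j s. j < 7 \<Longrightarrow> a \<le> s \<Longrightarrow> s \<le> b \<Longrightarrow> \<bar>Z' j s\<bar> \<le> K * (\<Sum>k<7. \<bar>Z k s\<bar>)"
proof -
  \<comment> \<open>three sample points in \<open>J\<close> determine the quadratic in \<open>x\<close> on the left of the real equation\<close>
  obtain x1 e where x1: "x1 \<in> J" and "e > 0" "ball x1 e \<subseteq> J"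
    using \<open>open J\<close> \<open>J \<noteq> {}\<close> open_contains_ball by blast
  define h where "h = e / 3"
  define X where "X = {x1, x1 + h, x1 + 2 * h}"
  have "h > 0" using \<open>e > 0\<close> by (simp add: h_def)
  have X: "X \<subseteq> J"
    using \<open>e > 0\<close> \<open>ball x1 e \<subseteq> J\<close> x1 by (auto simp: X_def h_def dist_real_def subset_iff)
  have X_abs: "\<bar>x\<bar> \<le> \<bar>x1\<bar> + 2 * h" if "x \<in> X" for x
    using that \<open>h > 0\<close> by (auto simp: X_def)
  have K: "compact ({a..b} \<times> X)" "{a..b} \<times> X \<subseteq> I \<times> J"
    using ab X by (auto simp: X_def intro!: compact_Times)
  obtain M where "0 \<le> M"
    and M: "\<And>t x. (t, x) \<in> {a..b} \<times> X \<Longrightarrow> norm (V t x) \<le> M \<and> norm (pt V t x) \<le> M \<and> norm (px V t x) \<le> M"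
    using smooth2_on_first_partials_bounded[OF V K] by blast
  obtain D where "0 \<le> D" and D: "\<And>a b c Q. \<bar>a * x1\<^sup>2 + b * x1 + c\<bar> \<le> Q
      \<Longrightarrow> \<bar>a * (x1 + h)\<^sup>2 + b * (x1 + h) + c\<bar> \<le> Q \<Longrightarrow> \<bar>a * (x1 + 2 * h)\<^sup>2 + b * (x1 + 2 * h) + c\<bar> \<le> Q
      \<Longrightarrow> \<bar>a\<bar> \<le> D * Q \<and> \<bar>b\<bar> \<le> D * Q \<and> \<bar>c\<bar> \<le> D * Q"
    using quadratic_coeffs_bounded_by_values[OF \<open>h > 0\<close>] by blast
  define B where "B = (3 + \<bar>x1\<bar> + 2 * h) * M"
  have "0 \<le> B" using \<open>h > 0\<close> \<open>0 \<le> M\<close> by (simp add: B_def)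
  show ?thesis
  proof (rule that[of "1 + 8 * D * B + B"])
    fix j :: nat and s assume "j < 7" "a \<le> s" "s \<le> b"
    then have s: "s \<in> {a..b}" "s \<in> I" using ab by auto
    define S where "S = (\<Sum>k<7. \<bar>Z k s\<bar>)"
    have Z_le: "\<bar>Z k s\<bar> \<le> S" if "k < 7" for k
      using that by (auto simp: S_def intro: member_le_sum)
    have "0 \<le> S" by (simp add: S_def sum_nonneg)
    note eqs = sys[unfolded determining_system_def, rule_format, OF s(2)]
    have rhs_le:
      "\<bar>Z 1 s * f (V s x) + Z 0 s * f (pt V s x) + (Z 1 s * x / 2 + Z 3 s) * f (px V s x)\<bar> \<le> B * S"
      if "x \<in> X" and f: "\<And>w. \<bar>f w\<bar> \<le> norm w" for x f
    proof -
      have "\<bar>Z 1 s * f (V s x) + Z 0 s * f (pt V s x) + (Z 1 s * x / 2 + Z 3 s) * f (px V s x)\<bar>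
            \<le> (3 + \<bar>x\<bar>) * M * S"
        using M[of s x] s(1) that(1) by (intro abs_potential_term_le Z_le order_trans[OF f]) auto
      also have "\<dots> \<le> B * S"
        unfolding B_def using X_abs[OF that(1)] \<open>0 \<le> S\<close> \<open>0 \<le> M\<close>
        by (intro mult_right_mono) auto
      finally show ?thesis .
    qed
    have "\<bar>(Z' 2 s / 8) * x\<^sup>2 + (Z' 4 s / 2) * x + Z' 5 s\<bar> \<le> B * S" if "x \<in> X" for x
      using eqs X that rhs_le[OF that abs_Re_le_cmod] by auto
    then have "\<bar>Z' 2 s / 8\<bar> \<le> D * (B * S) \<and> \<bar>Z' 4 s / 2\<bar> \<le> D * (B * S) \<and> \<bar>Z' 5 s\<bar> \<le> D * (B * S)"
      by (intro D) (auto simp: X_def)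
    then have quadratic_part: "\<bar>Z' j s\<bar> \<le> 8 * D * B * S" if "j \<in> {2, 4, 5}" for j
      using that \<open>0 \<le> D\<close> \<open>0 \<le> B\<close> \<open>0 \<le> S\<close> by (auto simp: mult_nonneg_nonneg)
    have "\<bar>Z' 6 s\<bar> \<le> S / 4 + B * S"
      using eqs x1 X Z_le[of 2] rhs_le[of x1 Im] abs_Im_le_cmod by (fastforce simp: X_def)
    moreover have "\<bar>Z' j s\<bar> \<le> S" if "j \<in> {0, 1, 3}" for j
      using eqs that Z_le[of 1] Z_le[of 2] Z_le[of 4] by auto
    moreover have "S \<le> (1 + 8 * D * B + B) * S" "8 * D * B * S \<le> (1 + 8 * D * B + B) * S"
      "S / 4 + B * S \<le> (1 + 8 * D * B + B) * S"
      using \<open>0 \<le> D\<close> \<open>0 \<le> B\<close> \<open>0 \<le> S\<close> by (simp_all add: algebra_simps)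
    ultimately show "\<bar>Z' j s\<bar> \<le> (1 + 8 * D * B + B) * S"
      using less_7_cases[OF \<open>j < 7\<close>] quadratic_part by fastforce
  qed
qed

lemma determining_system_zero:
  assumes sys: "determining_system I J V Z Z'" and V: "smooth2_on (I \<times> J) V"
    and "is_interval I" "open J" "J \<noteq> {}"
    and t0: "t0 \<in> I" "\<And>j. j < 7 \<Longrightarrow> Z j t0 = 0" and "t \<in> I"
  shows "\<forall>j<7. Z j t = 0"
proof -
  define a b where "a = min t0 t" and "b = max t0 t"
  have "{a..b} \<subseteq> I"
  proof
    fix s assume "s \<in> {a..b}"
    show "s \<in> I"
    proof (cases "t0 \<le> t")
      case True
      with \<open>s \<in> {a..b}\<close> show ?thesis
        using mem_is_interval_1_I[OF \<open>is_interval I\<close> t0(1) \<open>t \<in> I\<close>] by (simp add: a_def b_def)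
    next
      case False
      with \<open>s \<in> {a..b}\<close> show ?thesis
        using mem_is_interval_1_I[OF \<open>is_interval I\<close> \<open>t \<in> I\<close> t0(1)] by (simp add: a_def b_def)
    qed
  qed
  then have der: "\<And>j s. j < 7 \<Longrightarrow> a \<le> s \<Longrightarrow> s \<le> b \<Longrightarrow> (Z j has_real_derivative Z' j s) (at s)"
    using sys unfolding determining_system_def by auto
  obtain K where bound: "\<And>j s. j < 7 \<Longrightarrow> a \<le> s \<Longrightarrow> s \<le> b \<Longrightarrow> \<bar>Z' j s\<bar> \<le> K * (\<Sum>k<7. \<bar>Z k s\<bar>)"
    using determining_system_deriv_bound[OF sys V \<open>open J\<close> \<open>J \<noteq> {}\<close> \<open>{a..b} \<subseteq> I\<close>] by blast
  show ?thesis
    by (rule linear_ode_zero[of 7 a b Z Z' K t0 t, OF der bound]) (use t0 in \<open>auto simp: a_def b_def\<close>)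
qed

definition vf_of_jet :: "(nat \<Rightarrow> real) \<Rightarrow> real \<Rightarrow> complex \<Rightarrow> complex \<Rightarrow> real \<times> real \<times> complex \<times> complex" where
  "vf_of_jet z x u w =
     (let Phi = \<i> * of_real (z 2 * x\<^sup>2 / 8 + z 4 * x / 2 + z 5) + of_real (z 6)
      in (z 0, z 1 * x / 2 + z 3, Phi * u, cnj Phi * w))"

lemma vf_eq_vf_of_jet: "vf q t x u w = vf_of_jet (\<lambda>j. jet q j t) x u w"
  by (cases q) (simp add: vf_def vf_of_jet_def jet_def coefT_def coefX_def coefPhi_def)

lemma vf_of_jet_add_scaleR:
  "vf_of_jet y x u w + r *\<^sub>R vf_of_jet z x u w = vf_of_jet (\<lambda>j. y j + r * z j) x u w"
  by (simp add: vf_of_jet_def field_simps scaleR_conv_of_real)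

lemma sum_scaleR_vf_of_jet:
  "(\<Sum>i\<in>A. c i *\<^sub>R vf_of_jet (z i) x u w) = vf_of_jet (\<lambda>j. \<Sum>i\<in>A. c i * z i j) x u w"
proof (induction A rule: infinite_finite_induct)
  case (insert i A)
  then show ?case
    using vf_of_jet_add_scaleR[of "\<lambda>j. \<Sum>i\<in>A. c i * z i j" x u w "c i" "z i"]
    by (simp add: add.commute)
qed (simp_all add: vf_of_jet_def zero_prod_def)

lemma lincomb_vf_eq_0:
  assumes "\<And>j. j < 7 \<Longrightarrow> (\<Sum>i\<in>A. c i * jet (q i) j t) = 0"
  shows "(\<Sum>i\<in>A. c i *\<^sub>R vf (q i) t x u w) = 0"
proof -
  have "(\<Sum>i\<in>A. c i *\<^sub>R vf (q i) t x u w) = (\<Sum>i\<in>A. c i *\<^sub>R vf_of_jet (\<lambda>j. jet (q i) j t) x u w)"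
    by (simp add: vf_eq_vf_of_jet)
  also have "\<dots> = vf_of_jet (\<lambda>j. \<Sum>i\<in>A. c i * jet (q i) j t) x u w"
    by (rule sum_scaleR_vf_of_jet)
  also have "\<dots> = 0"
    using assms by (simp add: vf_of_jet_def zero_prod_def)
  finally show ?thesis .
qed

theorem lemma1:
  fixes V :: "real \<Rightarrow> real \<Rightarrow> complex" and I J :: "real set"
  assumes "open I" "is_interval I" "I \<noteq> {}"
      and "open J" "is_interval J" "J \<noteq> {}"
      and "smooth2_on (I \<times> J) V"
  shows "\<forall>k q. (\<forall>i<k. q i \<in> ess_alg I J V) \<and> vf_lin_indep I J k q \<longrightarrow> k \<le> 7"
proof (intro allI impI, elim conjE)
  fix k q assume ess: "\<forall>i<k. q i \<in> ess_alg I J V" and indep: "vf_lin_indep I J k q"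
  show "k \<le> 7"
  proof (rule ccontr)
    assume "\<not> k \<le> 7"
    then have dim: "DIM(real \<times> real \<times> real \<times> real \<times> real \<times> real \<times> real) < k" by simp
    obtain t0 where "t0 \<in> I" using \<open>I \<noteq> {}\<close> by blast
    define jets where "jets i = (jet (q i) 0 t0, jet (q i) 1 t0, jet (q i) 2 t0, jet (q i) 3 t0,
                                 jet (q i) 4 t0, jet (q i) 5 t0, jet (q i) 6 t0)" for i
    obtain c where c: "\<exists>i<k. c i \<noteq> 0" "(\<Sum>i<k. c i *\<^sub>R jets i) = 0"
      by (rule exists_nontrivial_lincomb_eq_0[OF dim])
    define Z where "Z j t = (\<Sum>i<k. c i * jet (q i) j t)" for j t
    have sys: "determining_system I J V Z (\<lambda>j t. \<Sum>i<k. c i * jet' (q i) j t)"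
      unfolding Z_def using ess by (intro determining_system_lincomb ess_alg_determining_system) auto
    have "Z j t0 = 0" if "j < 7" for j
      using c(2) less_7_cases[OF that] by (auto simp: jets_def Z_def prod_eq_iff fst_sum snd_sum)
    then have "\<forall>j<7. Z j t = 0" if "t \<in> I" for t
      by (rule determining_system_zero[OF sys assms(7,2,4,6) \<open>t0 \<in> I\<close> _ that])
    then have "\<forall>t\<in>I. \<forall>x\<in>J. \<forall>u w. (\<Sum>i<k. c i *\<^sub>R vf (q i) t x u w) = 0"
      by (auto intro!: lincomb_vf_eq_0 simp: Z_def)
    with indep c(1) show False
      unfolding vf_lin_indep_def by blast
  qed
qed

end
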